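(* Let $\beta$ be a totally positive quadratic integer with minimal polynomial $x^2 - Ex + C$, where $E, C \in \mathbb{Z}_{\geq 1}$. (i) If $C \geq 2E$, then $p_\beta(E\beta^2) \geq 4$. (ii) If $C \geq 2E - 3$, then $p_\beta(E\beta^3) \geq 5$. In particular, if $C \geq 2E - 3$, then it is not true that $p_\beta(E\beta^n) = n+1$ for every integer $n \geq 0$.
   Context: A quadratic integer is a root of a monic irreducible quadratic polynomial in $\mathbb{Z}[x]$; it is totally positive if both it and its conjugate are positive. For $\alpha \in \mathbb{C}$, $p_\beta(\alpha) \in \mathbb{Z}_{\geq 0}\cup\{\infty\}$ is the number of polynomials $f \in \mathbb{Z}_{\geq 0}[x]$ (non-negative integer coefficients) with $f(\beta) = \alpha$. Note $E = \beta + \beta'$ is the trace of $\beta$. *)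

theory Defs
  imports "HOL-Computational_Algebra.Polynomial" "HOL-Library.Extended_Nat" Complex_Main
begin

definition reps :: "complex \<Rightarrow> complex \<Rightarrow> nat poly set" where
  "reps \<beta> \<alpha> = {f. poly (map_poly of_nat f) \<beta> = \<alpha>}"

definition p_count :: "complex \<Rightarrow> complex \<Rightarrow> enat" where
  "p_count \<beta> \<alpha> = (if finite (reps \<beta> \<alpha>) then enat (card (reps \<beta> \<alpha>)) else \<infinity>)"

definition totally_positive_root :: "int poly \<Rightarrow> bool" where
  "totally_positive_root p \<longleftrightarrow>
     (\<forall>z::complex. poly (map_poly of_int p) z = 0 \<longrightarrow> z \<in> \<real> \<and> Re z > 0)"

end

theory Submission
  imports Defs
begin

text \<open>Since \<open>\<beta>\<^sup>2 + C = E\<beta>\<close>, we have \<open>E\<beta>\<^sup>2 = \<beta>\<^sup>3 + C\<beta>\<close> and \<open>E\<beta>\<^sup>3 = \<beta>\<^sup>4 + C\<beta>\<^sup>2\<close>.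
  Adding to these the multiples \<open>1, 2\<close> (resp. \<open>x, x + 1, 2x + 3\<close>) of the minimal polynomial
  \<open>x\<^sup>2 - Ex + C\<close> gives further representations, whose coefficients stay non-negative as long as
  \<open>C \<ge> 2E\<close> (resp. \<open>2C \<ge> 3E\<close> and \<open>C + 3 \<ge> 2E\<close>). In case (ii) the missing inequality
  \<open>2C \<ge> 3E\<close> comes from \<open>E \<ge> 7\<close>: the roots are real and distinct, so \<open>E\<^sup>2 > 4C \<ge> 8E - 12\<close>.\<close>

lemma p_count_ge_card:
  assumes "S \<subseteq> reps \<beta> \<alpha>" and "finite S"
  shows "enat (card S) \<le> p_count \<beta> \<alpha>"
proof (cases "finite (reps \<beta> \<alpha>)")
  case True
  then show ?thesis
    using assms card_mono unfolding p_count_def by auto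
qed (simp add: p_count_def)

lemma p_count_E_beta_square_ge_4:
  fixes \<beta> :: complex and e c :: nat
  assumes root: "\<beta>\<^sup>2 - of_nat e * \<beta> + of_nat c = 0" and "2 * e \<le> c"
  shows "p_count \<beta> (of_nat e * \<beta>\<^sup>2) \<ge> 4"
proof -
  let ?S = "{[:0, 0, e:], [:0, c, 0, 1:], [:c, c - e, 1, 1:], [:2 * c, c - 2 * e, 2, 1:]}"
  have c: "of_nat c = of_nat e * \<beta> - \<beta>\<^sup>2"
    using root by (simp add: algebra_simps)
  have "?S \<subseteq> reps \<beta> (of_nat e * \<beta>\<^sup>2)"
    using \<open>2 * e \<le> c\<close>
    by (simp add: reps_def map_poly_pCons of_nat_diff c; simp add: algebra_simps power2_eq_square)
  then have "enat (card ?S) \<le> p_count \<beta> (of_nat e * \<beta>\<^sup>2)"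
    by (rule p_count_ge_card) simp
  then show ?thesis
    by (simp add: numeral_eq_enat eval_nat_numeral)
qed

lemma p_count_E_beta_cube_ge_5:
  fixes \<beta> :: complex and e c :: nat
  assumes root: "\<beta>\<^sup>2 - of_nat e * \<beta> + of_nat c = 0" and "3 * e \<le> 2 * c" and "2 * e \<le> c + 3"
  shows "p_count \<beta> (of_nat e * \<beta> ^ 3) \<ge> 5"
proof -
  let ?S = "{[:0, 0, 0, e:], [:0, 0, c, 0, 1:], [:0, c, c - e, 1, 1:],
             [:c, c - e, c + 1 - e, 1, 1:], [:3 * c, 2 * c - 3 * e, c + 3 - 2 * e, 2, 1:]}"
  have c: "of_nat c = of_nat e * \<beta> - \<beta>\<^sup>2"
    using root by (simp add: algebra_simps)
  have "?S \<subseteq> reps \<beta> (of_nat e * \<beta> ^ 3)"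
    using assms(2,3)
    by (simp add: reps_def map_poly_pCons of_nat_diff c;
        simp add: algebra_simps power2_eq_square power3_eq_cube power4_eq_xxxx)
  moreover have "card ?S = 5"
    using assms(2,3) by (simp add: Suc_diff_le)
  ultimately have "enat 5 \<le> p_count \<beta> (of_nat e * \<beta> ^ 3)"
    by (metis p_count_ge_card finite.emptyI finite.insertI)
  then show ?thesis
    by (simp add: numeral_eq_enat)
qed

lemma not_irreducible_monic_quadratic_if_discriminant_zero:
  fixes E C :: int
  assumes "E\<^sup>2 = 4 * C"
  shows "\<not> irreducible [:C, -E, 1:]"
proof
  assume irr: "irreducible [:C, -E, 1:]"
  have "even (E\<^sup>2)"
    using assms by simp
  then obtain k where k: "E = 2 * k"
    by (auto elim: evenE)
  then have "C = k\<^sup>2"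
    using assms by (simp add: power2_eq_square)
  then have "[:C, -E, 1:] = [:-k, 1:] * [:-k, 1:]"
    using k by (simp add: power2_eq_square)
  moreover have "\<not> [:-k, 1:] dvd 1"
    by (auto simp: is_unit_poly_iff)
  ultimately show False
    using irreducibleD[OF irr] by blast
qed

lemma discriminant_nonneg_of_real_root:
  fixes r :: real and E C :: int
  assumes "r\<^sup>2 - E * r + C = 0"
  shows "4 * C \<le> E\<^sup>2"
proof -
  have "real_of_int (E\<^sup>2 - 4 * C) = (2 * r - E)\<^sup>2"
    using assms by (simp add: power2_eq_square algebra_simps)
  then show ?thesis
    by (metis diff_ge_0_iff_ge of_int_0_le_iff zero_le_power2)
qed

lemma trace_ge_7:
  fixes E C :: int
  assumes "E \<ge> 1" and "C \<ge> 1" and "4 * C < E\<^sup>2" and "2 * E - 3 \<le> C"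
  shows "E \<ge> 7"
proof -
  have "E \<ge> 3"
  proof (rule ccontr)
    assume "\<not> E \<ge> 3"
    then have "E\<^sup>2 \<le> 2\<^sup>2"
      using assms(1) by (intro power_mono) auto
    then show False
      using assms(2,3) by simp
  qed
  have "0 < (E - 2) * (E - 6)"
    using assms(3,4) by (simp add: power2_eq_square algebra_simps)
  then show ?thesis
    using \<open>E \<ge> 3\<close> by (simp add: zero_less_mult_iff)
qed

theorem proposition12:
  fixes \<beta> :: complex and E C :: int
  assumes "E \<ge> 1" and "C \<ge> 1"
    and "irreducible [:C, -E, 1:]"
    and "poly (map_poly of_int [:C, -E, 1:]) \<beta> = 0"
    and "totally_positive_root [:C, -E, 1:]"
  shows "(C \<ge> 2 * E \<longrightarrow> p_count \<beta> (of_int E * \<beta> ^ 2) \<ge> 4)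
       \<and> (C \<ge> 2 * E - 3 \<longrightarrow> p_count \<beta> (of_int E * \<beta> ^ 3) \<ge> 5)
       \<and> (C \<ge> 2 * E - 3 \<longrightarrow>
            \<not> (\<forall>n::nat. p_count \<beta> (of_int E * \<beta> ^ n) = enat (n + 1)))"
proof -
  obtain e c :: nat where E: "E = int e" and C: "C = int c"
    using assms(1,2) by (metis nonneg_int_cases order_trans zero_le_one)
  have root: "\<beta>\<^sup>2 - of_nat e * \<beta> + of_nat c = 0"
    using assms(4) by (simp add: E C map_poly_pCons power2_eq_square algebra_simps)
  have "\<beta> \<in> \<real>"
    using assms(4,5) unfolding totally_positive_root_def by blast
  then have "(Re \<beta>)\<^sup>2 - E * Re \<beta> + C = 0"
    using arg_cong[OF root, of Re] by (auto simp: E C power2_eq_square elim: Reals_cases)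
  then have "4 * C < E\<^sup>2"
    using discriminant_nonneg_of_real_root not_irreducible_monic_quadratic_if_discriminant_zero assms(3)
    by force
  then have cube: "p_count \<beta> (of_int E * \<beta> ^ 3) \<ge> 5" if "C \<ge> 2 * E - 3"
    using p_count_E_beta_cube_ge_5[OF root] trace_ge_7[OF assms(1,2)] that by (simp add: E C)
  moreover have "p_count \<beta> (of_int E * \<beta> ^ 2) \<ge> 4" if "C \<ge> 2 * E"
    using p_count_E_beta_square_ge_4[OF root] that by (simp add: E C)
  moreover have "p_count \<beta> (of_int E * \<beta> ^ 3) \<noteq> enat (3 + 1)" if "C \<ge> 2 * E - 3"
    using cube[OF that] by (auto simp: numeral_eq_enat)
  ultimately show ?thesis
    by blast
qed

end
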